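(* Let $M\ge 2$ be an integer. For all integers $1\le m\le M-1$ and all $z\in\mathbb{C}$, $$|t_m(z)|\le m^2\,2^{6m}\sup_{0\le\xi\le m}\big(\max\{|z+\xi|,M\}\big)^m.$$
   Context: For an integer $M\ge1$ and $0\le m\le M-1$, let $p_m(x)=x(x-1)\cdots(x-m+1)(x-M)(x-M-1)\cdots(x-M-m+1)$ and define the discrete Chebyshev polynomial $t_m(x)=\frac{1}{m!}\sum_{j=0}^m(-1)^j\binom{m}{j}p_m(x+m-j)$ (i.e. $\frac{1}{m!}$ times the $m$-th forward difference of $p_m$), viewed as a polynomial on $\mathbb{C}$. *)

theory Defs
  imports "HOL-Analysis.Analysis"
begin

definition cheb_p :: "nat \<Rightarrow> nat \<Rightarrow> complex \<Rightarrow> complex" where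
  "cheb_p M m x = (\<Prod>i<m. (x - of_nat i)) * (\<Prod>i<m. (x - of_nat M - of_nat i))"

definition cheb_t :: "nat \<Rightarrow> nat \<Rightarrow> complex \<Rightarrow> complex" where
  "cheb_t M m x = (1 / of_nat (fact m)) *
     (\<Sum>j\<le>m. (-1)^j * of_nat (m choose j) * cheb_p M m (x + of_nat m - of_nat j))"

end

theory Submission
  imports Defs
begin

text \<open>
  Up to the factor \<open>1/m!\<close>, \<open>t\<^sub>m\<close> is the \<open>m\<close>-th forward difference of \<open>p\<^sub>m\<close>, a product of two
  falling factorials of length \<open>m\<close>. Differencing such a product obeys a Leibniz rule that lowers
  one of the two lengths, so after \<open>m\<close> steps one is left with at most \<open>(2m)!/m!\<close> products of \<open>m\<close>
  linear factors, each evaluated near \<open>z\<close>. Every factor is bounded by \<open>|z| + 2M \<le> 3 max(|z|, M)\<close>,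
  whence \<open>|t\<^sub>m(z)| \<le> C(2m,m) (3 max(|z|,M))\<^sup>m \<le> 12\<^sup>m max(|z|,M)\<^sup>m\<close>, and the value at \<open>\<xi> = 0\<close>
  is dominated by the supremum.
\<close>

definition falling_factorial :: "'a::comm_ring_1 \<Rightarrow> nat \<Rightarrow> 'a" where
  "falling_factorial x a = (\<Prod>i<a. x - of_nat i)"

definition falling_pair :: "nat \<Rightarrow> nat \<Rightarrow> 'a::comm_ring_1 \<Rightarrow> 'a \<Rightarrow> 'a" where
  "falling_pair a b c x = falling_factorial x a * falling_factorial (x - c) b"

primrec fwd_diff :: "nat \<Rightarrow> ('a::comm_ring_1 \<Rightarrow> 'a) \<Rightarrow> 'a \<Rightarrow> 'a" where
  "fwd_diff 0 f = f"
| "fwd_diff (Suc n) f = fwd_diff n (\<lambda>x. f (x + 1) - f x)"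

lemma fwd_diff_linear:
  "fwd_diff n (\<lambda>x. \<alpha> * f x + \<beta> * g x) x = \<alpha> * fwd_diff n f x + \<beta> * fwd_diff n g x"
proof (induction n arbitrary: f g)
  case 0
  then show ?case by simp
next
  case (Suc n)
  have "(\<lambda>x. (\<alpha> * f (x + 1) + \<beta> * g (x + 1)) - (\<alpha> * f x + \<beta> * g x)) =
        (\<lambda>x. \<alpha> * (f (x + 1) - f x) + \<beta> * (g (x + 1) - g x))"
    by (auto simp: algebra_simps)
  then show ?case
    using Suc by simp
qed

lemma fwd_diff_eq_sum:
  "fwd_diff n f x = (\<Sum>j\<le>n. (-1)^j * of_nat (n choose j) * f (x + of_nat n - of_nat j))"
proof (induction n arbitrary: f)
  case 0
  then show ?case by simp
next
  case (Suc n)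
  define h where "h j = f (x + of_nat n + 1 - of_nat j)" for j
  define s :: "nat \<Rightarrow> 'a" where "s j = (-1)^j" for j
  have shift: "f (x + of_nat n - of_nat j) = h (Suc j)"
    "f (x + of_nat n - of_nat j + 1) = h j" "f (1 + (x + of_nat n) - of_nat j) = h j" for j
    unfolding h_def by (simp_all add: algebra_simps)
  have lhs: "fwd_diff (Suc n) f x =
      (\<Sum>j\<le>n. s j * of_nat (n choose j) * h j) - (\<Sum>j\<le>n. s j * of_nat (n choose j) * h (Suc j))"
    by (simp add: Suc shift s_def algebra_simps sum_subtractf)
  define g where "g j = s j * of_nat (n choose j) * h j" for j
  have "(\<Sum>j\<le>Suc n. g j) = g 0 + (\<Sum>j\<le>n. g (Suc j))"
    by (rule sum.atMost_Suc_shift)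
  moreover have "(\<Sum>j\<le>Suc n. g j) = (\<Sum>j\<le>n. g j)"
    by (simp add: g_def binomial_eq_0)
  ultimately have pascal: "(\<Sum>j\<le>n. s j * of_nat (n choose j) * h j) =
      h 0 - (\<Sum>j\<le>n. s j * of_nat (n choose Suc j) * h (Suc j))"
    unfolding g_def by (simp add: s_def sum_negf)
  have rhs: "(\<Sum>j\<le>Suc n. s j * of_nat (Suc n choose j) * h j) =
      h 0 - (\<Sum>j\<le>n. s j * of_nat (n choose j) * h (Suc j))
          - (\<Sum>j\<le>n. s j * of_nat (n choose Suc j) * h (Suc j))"
    by (subst sum.atMost_Suc_shift) (simp add: s_def algebra_simps sum.distrib sum_subtractf sum_negf)
  have "fwd_diff (Suc n) f x = (\<Sum>j\<le>Suc n. s j * of_nat (Suc n choose j) * h j)"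
    unfolding lhs pascal rhs by simp
  then show ?case
    unfolding s_def h_def by (simp add: algebra_simps)
qed

lemma falling_factorial_diff:
  "falling_factorial (x + 1) a - falling_factorial x a = of_nat a * falling_factorial x (a - 1)"
proof (cases a)
  case 0
  then show ?thesis by (simp add: falling_factorial_def)
next
  case (Suc b)
  have "falling_factorial (x + 1) (Suc b) = (x + 1) * falling_factorial x b"
    unfolding falling_factorial_def by (subst prod.lessThan_Suc_shift) (simp add: algebra_simps)
  moreover have "falling_factorial x (Suc b) = falling_factorial x b * (x - of_nat b)"
    unfolding falling_factorial_def by simp
  ultimately show ?thesis
    unfolding Suc by (simp add: algebra_simps)
qed

lemma falling_pair_diff:
  "falling_pair a b c (x + 1) - falling_pair a b c x =
     of_nat a * falling_pair (a - 1) b (c - 1) x + of_nat b * falling_pair a (b - 1) c x"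
proof -
  have "x + 1 - c = x - c + 1" "x - (c - 1) = x - c + 1"
    by simp_all
  then show ?thesis
    using falling_factorial_diff[of x a] falling_factorial_diff[of "x - c" b]
    unfolding falling_pair_def by (simp add: algebra_simps)
qed

lemma norm_prod_lessThan_le:
  fixes f :: "nat \<Rightarrow> 'a::real_normed_field"
  assumes "\<forall>i<a. norm (f i) \<le> K"
  shows "norm (\<Prod>i<a. f i) \<le> K ^ a"
proof -
  have "norm (\<Prod>i<a. f i) = (\<Prod>i<a. norm (f i))"
    by (simp add: prod_norm)
  also have "\<dots> \<le> (\<Prod>i<a. K)"
    using assms by (intro prod_mono) auto
  finally show ?thesis
    by simp
qed

lemma mult_binomial_fact_pred:
  "real N * (real (N - 1 choose n) * fact n) = real (N choose Suc n) * fact (Suc n)"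
proof (cases N)
  case (Suc N')
  have "real (Suc N') * real (N' choose n) = real (Suc N' choose Suc n) * real (Suc n)"
    using Suc_times_binomial_eq[of N' n] by (metis of_nat_mult)
  then show ?thesis
    unfolding Suc by (simp add: algebra_simps)
qed simp

text \<open>
  Applying \<open>falling_pair_diff\<close> \<open>n\<close> times yields \<open>C(a+b,n) n!\<close> terms (with multiplicity), each a
  product of \<open>a+b-n\<close> factors \<open>x - i\<close> or \<open>x - c + k - i\<close> with \<open>k \<le> n\<close>.
\<close>

lemma norm_fwd_diff_falling_pair_le:
  fixes x c :: "'a::real_normed_field"
  assumes "K \<ge> 0"
    and "\<forall>i<a. norm (x - of_nat i) \<le> K"
    and "\<forall>k\<le>n. \<forall>i<b. norm (x - c + of_nat k - of_nat i) \<le> K"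
  shows "norm (fwd_diff n (falling_pair a b c) x) \<le> real (a + b choose n) * fact n * K ^ (a + b - n)"
  using assms(2,3)
proof (induction n arbitrary: a b c)
  case 0
  have "norm (falling_factorial x a) \<le> K ^ a" "norm (falling_factorial (x - c) b) \<le> K ^ b"
    using 0 unfolding falling_factorial_def by (auto intro!: norm_prod_lessThan_le)
  then show ?case
    by (simp add: falling_pair_def norm_mult power_add mult_mono assms(1))
next
  case (Suc n)
  let ?B = "real (a + b - 1 choose n) * fact n * K ^ (a + b - 1 - n)"
  have "(\<lambda>y. falling_pair a b c (y + 1) - falling_pair a b c y) =
      (\<lambda>y. of_nat a * falling_pair (a - 1) b (c - 1) y + of_nat b * falling_pair a (b - 1) c y)"
    by (rule ext, rule falling_pair_diff)
  then have split: "fwd_diff (Suc n) (falling_pair a b c) x =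
      of_nat a * fwd_diff n (falling_pair (a - 1) b (c - 1)) x + of_nat b * fwd_diff n (falling_pair a (b - 1) c) x"
    by (simp add: fwd_diff_linear)
  have left: "real a * norm (fwd_diff n (falling_pair (a - 1) b (c - 1)) x) \<le> real a * ?B"
  proof (cases "a = 0")
    case False
    have "\<forall>k\<le>n. \<forall>i<b. norm (x - (c - 1) + of_nat k - of_nat i) \<le> K"
    proof (intro allI impI)
      fix k i
      assume "k \<le> n" "i < b"
      then have "norm (x - c + of_nat (Suc k) - of_nat i) \<le> K"
        using Suc.prems(2) by blast
      then show "norm (x - (c - 1) + of_nat k - of_nat i) \<le> K"
        by (simp add: algebra_simps)
    qed
    then have "norm (fwd_diff n (falling_pair (a - 1) b (c - 1)) x) \<le> ?B"
      using Suc.IH[of "a - 1" b "c - 1"] Suc.prems False by (simp add: less_diff_conv)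
    then show ?thesis
      by (rule mult_left_mono) simp
  qed simp
  have right: "real b * norm (fwd_diff n (falling_pair a (b - 1) c) x) \<le> real b * ?B"
  proof (cases "b = 0")
    case False
    then have "norm (fwd_diff n (falling_pair a (b - 1) c) x) \<le> ?B"
      using Suc.IH[of a "b - 1" c] Suc.prems by (simp add: less_diff_conv)
    then show ?thesis
      by (rule mult_left_mono) simp
  qed simp
  have "norm (fwd_diff (Suc n) (falling_pair a b c) x) \<le>
      real a * norm (fwd_diff n (falling_pair (a - 1) b (c - 1)) x)
      + real b * norm (fwd_diff n (falling_pair a (b - 1) c) x)"
    unfolding split by (rule order_trans[OF norm_triangle_ineq]) (simp add: norm_mult)
  also have "\<dots> \<le> real (a + b) * ?B"
    using left right by (simp add: algebra_simps)
  also have "\<dots> = real (a + b choose Suc n) * fact (Suc n) * K ^ (a + b - Suc n)"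
    using mult_binomial_fact_pred[of "a + b" n] by (simp add: mult.assoc)
  finally show ?case .
qed

lemma cheb_t_eq_fwd_diff:
  "cheb_t M m z = fwd_diff m (falling_pair m m (of_nat M)) z / fact m"
proof -
  have "cheb_p M m = falling_pair m m (of_nat M)"
    by (rule ext) (simp add: cheb_p_def falling_pair_def falling_factorial_def)
  then show ?thesis
    unfolding cheb_t_def fwd_diff_eq_sum by simp
qed

lemma norm_cheb_t_le:
  assumes "m \<le> M"
  shows "norm (cheb_t M m z) \<le> real (2 * m choose m) * (norm z + 2 * real M) ^ m"
proof -
  define K where "K = norm z + 2 * real M"
  have "K \<ge> 0"
    unfolding K_def by simp
  have left_factors: "norm (z - of_nat i) \<le> K" if "i < m" for i
    using norm_triangle_ineq4[of z "of_nat i"] that assms unfolding K_def by simp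
  have right_factors: "norm (z - of_nat M + of_nat k - of_nat i) \<le> K" if "k \<le> m" "i < m" for k i
  proof -
    have "norm (of_nat k - of_nat M - of_nat i :: complex) = \<bar>real k - real M - real i\<bar>"
      by (metis norm_of_real of_real_diff of_real_of_nat_eq)
    then have "norm (z - of_nat M + of_nat k - of_nat i) \<le> norm z + \<bar>real k - real M - real i\<bar>"
      using norm_triangle_ineq[of z "of_nat k - of_nat M - of_nat i"] by (simp add: algebra_simps)
    also have "\<dots> \<le> K"
      using that assms unfolding K_def by linarith
    finally show ?thesis .
  qed
  have "norm (cheb_t M m z) = norm (fwd_diff m (falling_pair m m (of_nat M)) z) / fact m"
    unfolding cheb_t_eq_fwd_diff by (simp add: norm_divide)
  also have "\<dots> \<le> real (m + m choose m) * fact m * K ^ (m + m - m) / fact m"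
    using \<open>K \<ge> 0\<close> left_factors right_factors
    by (intro divide_right_mono norm_fwd_diff_falling_pair_le) auto
  also have "\<dots> = real (2 * m choose m) * K ^ m"
    by (simp add: mult_2)
  finally show ?thesis
    unfolding K_def .
qed

lemma le_SUP_max_norm_pow:
  fixes z :: complex
  assumes "\<xi> \<in> {0..r}"
  shows "max (norm (z + of_real \<xi>)) M ^ m \<le> (SUP \<xi>\<in>{0..r}. max (norm (z + of_real \<xi>)) M ^ m)"
  by (rule cSUP_upper[OF assms], intro bounded_imp_bdd_above compact_imp_bounded
      compact_continuous_image continuous_intros) auto

theorem lemma3:
  fixes M m :: nat and z :: complex
  assumes "M \<ge> 2" and "1 \<le> m" and "m \<le> M - 1"
  shows "norm (cheb_t M m z) \<le>
    real m ^ 2 * 2 ^ (6 * m) *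
    (SUP \<xi>\<in>{0..real m}. (max (norm (z + complex_of_real \<xi>)) (real M)) ^ m)"
proof -
  define R where "R = max (norm z) (real M)"
  have binomial_le: "real (2 * m choose m) \<le> 4 ^ m"
    using binomial_le_pow2[of "2 * m" m] by (simp add: power_mult flip: of_nat_le_iff)
  have "norm (cheb_t M m z) \<le> real (2 * m choose m) * (norm z + 2 * real M) ^ m"
    using assms by (intro norm_cheb_t_le) simp
  also have "\<dots> \<le> 4 ^ m * (3 * R) ^ m"
    using binomial_le by (intro mult_mono power_mono) (auto simp: R_def)
  also have "\<dots> = 12 ^ m * R ^ m"
    unfolding power_mult_distrib[symmetric] mult.assoc[symmetric] by simp
  also have "\<dots> \<le> real m ^ 2 * 2 ^ (6 * m) * R ^ m"
  proof (rule mult_right_mono)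
    have "(12::real) ^ m \<le> 64 ^ m"
      by (rule power_mono) auto
    also have "\<dots> \<le> real m ^ 2 * 2 ^ (6 * m)"
      using assms by (simp add: power_mult)
    finally show "(12::real) ^ m \<le> real m ^ 2 * 2 ^ (6 * m)" .
  qed (simp add: R_def)
  also have "\<dots> \<le> real m ^ 2 * 2 ^ (6 * m) *
      (SUP \<xi>\<in>{0..real m}. (max (norm (z + complex_of_real \<xi>)) (real M)) ^ m)"
  proof (rule mult_left_mono)
    have "R ^ m = max (norm (z + complex_of_real 0)) (real M) ^ m"
      by (simp add: R_def)
    also have "\<dots> \<le> (SUP \<xi>\<in>{0..real m}. (max (norm (z + complex_of_real \<xi>)) (real M)) ^ m)"
      by (rule le_SUP_max_norm_pow) simp
    finally show "R ^ m \<le> (SUP \<xi>\<in>{0..real m}. (max (norm (z + complex_of_real \<xi>)) (real M)) ^ m)" .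
  qed simp
  finally show ?thesis .
qed
end
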